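(* Fix a positive integer $s$ and let $h_{i,j}=h_{s,i,j}$ and $H_i(x)=\sum_{j\ge i+1}h_{s,i,j}x^j$ be as in the context. Then for $i>1$, $$H_i=-\Big(\frac{sx}{i}-1\Big)H_{i-1}+\frac{x(x-1)}{i}H_{i-1}',$$ where $H'$ denotes the derivative with respect to $x$ (as formal power series).
   Context: For a fixed positive integer $s$, the numbers $h_{s,i,j}$ (integers $i\ge 0$, $j$) are defined recursively by: $h_{s,i,j}=0$ if $j\le i$; for $i=0$ and $j\ge 1$, $h_{s,0,j}=\binom{s+j-1}{j}\frac{s-j}{s}$; for $i>0$ and $j>i$, $h_{s,i,j}=-\frac{s-j+1}{i}h_{s,i-1,j-1}-\frac{j-i}{i}h_{s,i-1,j}$. $H_i(x)=\sum_{j\ge i+1}h_{s,i,j}x^j$ is the ordinary generating function, a formal power series in $x$. *)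

theory Defs
  imports "HOL-Computational_Algebra.Formal_Power_Series"
begin

text \<open>h s i j, for a fixed positive integer s. The index j ranges over integers in the
paper, but h vanishes for j \<le> i (with i \<ge> 0), so natural-number j loses nothing.\<close>
fun h :: "nat \<Rightarrow> nat \<Rightarrow> nat \<Rightarrow> real" where
  "h s 0 j = (if j \<le> 0 then 0
              else of_nat ((s + j - 1) choose j) * (of_int (int s - int j) / of_nat s))"
| "h s (Suc i) j = (if j \<le> Suc i then 0
              else - (of_int (int s - int j + 1) / of_nat (Suc i)) * h s i (j - 1)
                   - (of_nat (j - Suc i) / of_nat (Suc i)) * h s i j)"

definition H :: "nat \<Rightarrow> nat \<Rightarrow> real fps" where
  "H s i = Abs_fps (\<lambda>j. if j \<ge> i + 1 then h s i j else 0)"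

end

theory Submission
  imports Defs
begin

text \<open>Comparing coefficients of x^(m+1) turns the identity, multiplied by i, into
  i h(i,m+1) = (m - s) h(i-1,m) + (i - 1 - m) h(i-1,m+1), which is the defining recursion of h.
  Thanks to the vanishing h(i,j) = 0 for j \<le> i, this recursion holds for every m, so the
  identity holds for all i \<ge> 1 and every s.\<close>

lemma h_eq_0: "j \<le> i \<Longrightarrow> h s i j = 0"
  by (cases i) auto

lemma H_nth [simp]: "fps_nth (H s i) j = h s i j"
  by (simp add: H_def h_eq_0)

lemma h_Suc_Suc:
  "h s (Suc i) (Suc m) = ((real m - real s) * h s i m + (real i - real m) * h s i (Suc m)) / real (Suc i)"
proof (cases "m \<le> i")
  case True
  then have "h s i m = 0"
    by (rule h_eq_0)
  moreover have "(real i - real m) * h s i (Suc m) = 0"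
    using True by (cases "m = i") (simp_all add: h_eq_0)
  ultimately show ?thesis
    using True by simp
next
  case False
  then show ?thesis
    by (simp add: of_nat_diff diff_divide_distrib add_divide_distrib algebra_simps)
qed

lemma fps_nth_Suc_linear_deriv_combination:
  fixes f :: "'a::comm_ring_1 fps"
  shows "fps_nth (- (fps_const a * fps_X - 1) * f + fps_const b * (fps_X * (fps_X - 1)) * fps_deriv f) (Suc m)
       = fps_nth f (Suc m) - a * fps_nth f m
         + b * (of_nat m * fps_nth f m - of_nat (Suc m) * fps_nth f (Suc m))"
  by (cases m) (simp_all add: algebra_simps fps_X_mult_nth)

lemma H_Suc:
  "H s (Suc k) = - (fps_const (of_nat s / of_nat (Suc k)) * fps_X - 1) * H s k
                 + fps_const (1 / of_nat (Suc k)) * (fps_X * (fps_X - 1)) * fps_deriv (H s k)"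
proof (rule fps_ext)
  fix n
  show "fps_nth (H s (Suc k)) n = fps_nth (- (fps_const (of_nat s / of_nat (Suc k)) * fps_X - 1) * H s k
                 + fps_const (1 / of_nat (Suc k)) * (fps_X * (fps_X - 1)) * fps_deriv (H s k)) n"
  proof (cases n)
    case 0
    then show ?thesis
      by (simp add: h_eq_0)
  next
    case (Suc m)
    have "h s (Suc k) (Suc m) = h s k (Suc m) - real s / real (Suc k) * h s k m
        + 1 / real (Suc k) * (real m * h s k m - real (Suc m) * h s k (Suc m))"
      unfolding h_Suc_Suc by (simp add: field_simps del: of_nat_Suc) (simp add: algebra_simps)
    then show ?thesis
      unfolding Suc fps_nth_Suc_linear_deriv_combination by simp
  qed
qed

theorem lemma2:
  fixes s i :: nat
  assumes "s > 0" and "i > 1"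
  shows "H s i = - (fps_const (of_nat s / of_nat i) * fps_X - 1) * H s (i - 1)
                 + fps_const (1 / of_nat i) * (fps_X * (fps_X - 1)) * fps_deriv (H s (i - 1))"
proof -
  obtain k where "i = Suc k"
    using assms(2) by (cases i) auto
  then show ?thesis
    using H_Suc[of s k] by simp
qed

end
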